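(* Let $\alpha\in[0,1)$, $K_\alpha(x,y)=\dfrac{1}{x^2+2\cos(\pi\alpha)xy+y^2}$, $Q_\alpha(x,y)=y+x\cos(\pi\alpha)$, and for integers $p\ge0$ $$T_{\alpha,2p}=(2p)!\sum_{k=0}^p(-1)^{p-k}\binom{p+k}{p-k}(4Q_\alpha^2)^kK_\alpha^{p+k+1},\qquad T_{\alpha,2p+1}=2(2p+1)!\,Q_\alpha\sum_{k=0}^p(-1)^{p+1-k}\binom{p+1+k}{p-k}(4Q_\alpha^2)^kK_\alpha^{p+k+2}.$$ Then for every $j\ge1$ and $r\ge0$, $$\frac{\partial^jT_{\alpha,r}}{\partial x^j}(1,0+)=(-1)^j\frac{(r+j+1)!}{(r+1)!}\,T_{\alpha,r}(1,0+).$$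
   Context: For a function $F(x,y)$ smooth on $(0,\infty)\times[0,\infty)$, $F(1,0+)$ denotes $\lim_{y\to0+}F(1,y)$. *)

theory Defs
  imports "HOL-Analysis.Analysis"
begin

definition K_alpha :: "real \<Rightarrow> real \<Rightarrow> real \<Rightarrow> real" where
  "K_alpha \<alpha> x y = 1 / (x^2 + 2 * cos (pi * \<alpha>) * x * y + y^2)"

definition Q_alpha :: "real \<Rightarrow> real \<Rightarrow> real \<Rightarrow> real" where
  "Q_alpha \<alpha> x y = y + x * cos (pi * \<alpha>)"

definition T_alpha :: "real \<Rightarrow> nat \<Rightarrow> real \<Rightarrow> real \<Rightarrow> real" where
  "T_alpha \<alpha> r x y =
    (if even r then
       (let p = r div 2 in
        fact (2*p) * (\<Sum>k=0..p. (-1)^(p-k) * real ((p+k) choose (p-k))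
            * (4 * (Q_alpha \<alpha> x y)^2)^k * (K_alpha \<alpha> x y)^(p+k+1)))
     else
       (let p = r div 2 in
        2 * fact (2*p+1) * Q_alpha \<alpha> x y * (\<Sum>k=0..p. (-1)^(p+1-k) * real ((p+1+k) choose (p-k))
            * (4 * (Q_alpha \<alpha> x y)^2)^k * (K_alpha \<alpha> x y)^(p+k+2))))"

end

theory Submission
  imports Defs
begin

text \<open>
  Let \<open>c = cos (\<pi>\<alpha>) > -1\<close>. The function \<open>T\<close> and all its \<open>x\<close>-derivatives are polynomials
  in \<open>x\<close>, \<open>y\<close> and \<open>1 / (x\<^sup>2 + 2cxy + y\<^sup>2)\<close>, whose denominator is positive at \<open>(1, y)\<close> for
  \<open>y \<ge> 0\<close>; so each \<open>\<partial>\<^sup>jT/\<partial>x\<^sup>j (1, y)\<close> is continuous in \<open>y\<close> and tends to the \<open>j\<close>-th derivative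
  of \<open>x \<mapsto> T(x, 0)\<close> at \<open>1\<close>. Since \<open>K\<close> is homogeneous of degree \<open>-2\<close> and \<open>Q\<close> of degree \<open>1\<close>,
  \<open>T\<close> is homogeneous of degree \<open>-(r + 2)\<close>, i.e. \<open>T(x, 0) = T(1, 0) / x\<^sup>r\<^sup>+\<^sup>2\<close>, and the
  \<open>j\<close>-th derivative of this at \<open>1\<close> is \<open>(-1)\<^sup>j (r + 2) \<cdots> (r + j + 1) T(1, 0)\<close>.
\<close>

definition quad :: "real \<Rightarrow> real \<Rightarrow> real \<Rightarrow> real" where
  "quad c x y = x^2 + 2*c*x*y + y^2"

inductive quad_rational :: "real \<Rightarrow> (real \<Rightarrow> real \<Rightarrow> real) \<Rightarrow> bool" for c where
  const: "quad_rational c (\<lambda>x y. a)"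
| fst: "quad_rational c (\<lambda>x y. x)"
| snd: "quad_rational c (\<lambda>x y. y)"
| inverse_quad: "quad_rational c (\<lambda>x y. 1 / quad c x y)"
| add: "quad_rational c f \<Longrightarrow> quad_rational c g \<Longrightarrow> quad_rational c (\<lambda>x y. f x y + g x y)"
| mult: "quad_rational c f \<Longrightarrow> quad_rational c g \<Longrightarrow> quad_rational c (\<lambda>x y. f x y * g x y)"

lemma quad_rational_power: "quad_rational c f \<Longrightarrow> quad_rational c (\<lambda>x y. f x y ^ n)"
  by (induction n) (simp_all add: quad_rational.const quad_rational.mult)

lemma quad_rational_sum:
  "finite A \<Longrightarrow> (\<And>k. k \<in> A \<Longrightarrow> quad_rational c (f k)) \<Longrightarrow> quad_rational c (\<lambda>x y. \<Sum>k\<in>A. f k x y)"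
  by (induction A rule: finite_induct) (simp_all add: quad_rational.const quad_rational.add)

lemma quad_rational_isCont:
  assumes "quad_rational c f" and "quad c x y \<noteq> 0"
  shows "isCont (f x) y"
  using assms by induction (auto simp: quad_def intro!: continuous_intros)

lemma quad_rational_has_derivative:
  assumes "quad_rational c f"
  shows "\<exists>g. quad_rational c g \<and>
           (\<forall>x y. quad c x y \<noteq> 0 \<longrightarrow> ((\<lambda>x. f x y) has_real_derivative g x y) (at x))"
  using assms
proof induction
  case (const a)
  show ?case by (intro exI[of _ "\<lambda>x y. 0"]) (auto intro: quad_rational.intros)
next
  case fst
  show ?case by (intro exI[of _ "\<lambda>x y. 1"]) (auto intro: quad_rational.intros)
next
  case snd
  show ?case by (intro exI[of _ "\<lambda>x y. 0"]) (auto intro: quad_rational.intros)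
next
  case inverse_quad
  let ?g = "\<lambda>x y. (- 2 * x + - 2 * c * y) * (1 / quad c x y) * (1 / quad c x y)"
  have "((\<lambda>x. 1 / quad c x y) has_real_derivative ?g x y) (at x)" if "quad c x y \<noteq> 0" for x y
    using that unfolding quad_def
    by (auto intro!: derivative_eq_intros simp: power2_eq_square field_simps)
  moreover have "quad_rational c ?g"
    by (intro quad_rational.intros)
  ultimately show ?case by blast
next
  case (add f g)
  then obtain f' g' where "quad_rational c f'" "quad_rational c g'"
    "\<forall>x y. quad c x y \<noteq> 0 \<longrightarrow> ((\<lambda>x. f x y) has_real_derivative f' x y) (at x)"
    "\<forall>x y. quad c x y \<noteq> 0 \<longrightarrow> ((\<lambda>x. g x y) has_real_derivative g' x y) (at x)"
    by blast
  then show ?case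
    by (intro exI[of _ "\<lambda>x y. f' x y + g' x y"]) (auto intro: quad_rational.intros DERIV_add)
next
  case (mult f g)
  then obtain f' g' where "quad_rational c f'" "quad_rational c g'"
    "\<forall>x y. quad c x y \<noteq> 0 \<longrightarrow> ((\<lambda>x. f x y) has_real_derivative f' x y) (at x)"
    "\<forall>x y. quad c x y \<noteq> 0 \<longrightarrow> ((\<lambda>x. g x y) has_real_derivative g' x y) (at x)"
    by blast
  with mult.hyps show ?case
    by (intro exI[of _ "\<lambda>x y. f' x y * g x y + g' x y * f x y"])
       (auto intro: quad_rational.intros DERIV_mult)
qed

lemma higher_deriv_eqI:
  fixes F :: "nat \<Rightarrow> real \<Rightarrow> real"
  assumes "open S" and "x \<in> S" and "\<And>x. x \<in> S \<Longrightarrow> f x = F 0 x"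
    and "\<And>n x. x \<in> S \<Longrightarrow> (F n has_real_derivative F (Suc n) x) (at x)"
  shows "(deriv ^^ n) f x = F n x"
  using \<open>x \<in> S\<close>
proof (induction n arbitrary: x)
  case 0
  then show ?case using assms(3) by simp
next
  case (Suc n)
  have "((deriv ^^ n) f has_real_derivative F (Suc n) x) (at x)"
    using assms(4)[OF Suc.prems] \<open>open S\<close> Suc.prems
    by (rule has_field_derivative_transform_within_open) (simp add: Suc.IH)
  then show ?case by (simp add: DERIV_imp_deriv)
qed

lemma quad_rational_higher_deriv:
  assumes "quad_rational c f"
  obtains g where "quad_rational c g"
    and "\<And>x y. quad c x y \<noteq> 0 \<Longrightarrow> (deriv ^^ n) (\<lambda>x. f x y) x = g x y"
proof -
  obtain d where d: "\<And>h. quad_rational c h \<Longrightarrow> quad_rational c (d h) \<and>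
      (\<forall>x y. quad c x y \<noteq> 0 \<longrightarrow> ((\<lambda>x. h x y) has_real_derivative d h x y) (at x))"
    using quad_rational_has_derivative by metis
  have rational: "quad_rational c ((d ^^ k) f)" for k
    by (induction k) (simp_all add: assms d)
  have "(deriv ^^ n) (\<lambda>x. f x y) x = (d ^^ n) f x y" if "quad c x y \<noteq> 0" for x y
  proof (rule higher_deriv_eqI[where S = "{x. quad c x y \<noteq> 0}"])
    show "open {x. quad c x y \<noteq> 0}"
      by (rule open_Collect_neq) (simp_all add: quad_def continuous_intros)
  qed (use that d rational in auto)
  with rational that show ?thesis by blast
qed

lemma has_real_derivative_inverse_power:
  fixes x :: real
  assumes "x \<noteq> 0"
  shows "((\<lambda>x. 1 / x ^ N) has_real_derivative - real N / x ^ Suc N) (at x)"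
proof -
  have "((\<lambda>x. 1 / x ^ N) has_real_derivative - (real N * x ^ (N - 1)) / (x ^ N * x ^ N)) (at x)"
    using assms by (auto intro!: derivative_eq_intros)
  moreover have "- (real N * x ^ (N - 1)) / (x ^ N * x ^ N) = - real N / x ^ Suc N"
    using assms by (cases N) (simp_all add: field_simps)
  ultimately show ?thesis by simp
qed

lemma higher_deriv_inverse_power:
  fixes A :: real
  assumes "x \<noteq> 0"
  shows "(deriv ^^ n) (\<lambda>x. A / x ^ m) x = A * (-1) ^ n * pochhammer (real m) n / x ^ (m + n)"
proof (rule higher_deriv_eqI[where S = "{x. x \<noteq> 0}"])
  fix k and x :: real
  assume "x \<in> {x. x \<noteq> 0}"
  then show "((\<lambda>x. A * (-1) ^ k * pochhammer (real m) k / x ^ (m + k)) has_real_derivative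
      A * (-1) ^ Suc k * pochhammer (real m) (Suc k) / x ^ (m + Suc k)) (at x)"
    using DERIV_cmult[OF has_real_derivative_inverse_power[of x "m + k"],
        where c = "A * (-1) ^ k * pochhammer (real m) k"]
    by (simp add: pochhammer_Suc field_simps)
qed (use assms in \<open>auto simp: open_Collect_neq\<close>)

lemma quad_pos:
  assumes "-1 < c" and "0 \<le> y"
  shows "0 < quad c 1 y"
proof (cases "y = 1")
  case True
  with assms show ?thesis by (simp add: quad_def)
next
  case False
  have "- y \<le> c * y"
    using mult_right_mono[of "-1" c y] assms by simp
  then have "(1 - y)^2 \<le> quad c 1 y"
    by (simp add: quad_def power2_eq_square algebra_simps)
  moreover have "0 < (1 - y)^2"
    using False by simp
  ultimately show ?thesis by linarith
qed

lemma homogeneous_term_scaling: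
  fixes t q K :: real
  assumes "1 \<le> e"
  shows "(4 * (t * q)^2)^k * (K / t^2)^(e + k) = (4 * q^2)^k * K^(e + k) / t^(2 * e)"
proof (cases "t = 0")
  case True
  with assms show ?thesis by (simp add: zero_power)
next
  case False
  then show ?thesis
    by (simp add: power_mult_distrib power_divide power_add field_simps flip: power_mult)
qed

lemma K_alpha_homogeneous: "K_alpha \<alpha> (t * x) (t * y) = K_alpha \<alpha> x y / t^2"
  by (simp add: K_alpha_def power_mult_distrib power2_eq_square field_simps)

lemma Q_alpha_homogeneous: "Q_alpha \<alpha> (t * x) (t * y) = t * Q_alpha \<alpha> x y"
  by (simp add: Q_alpha_def algebra_simps)

text \<open>Thanks to \<open>x / 0 = 0\<close> this also holds for \<open>t = 0\<close>, so the restriction of \<open>T_alpha\<close>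
  to \<open>y = 0\<close> below is an equation of functions on all of \<open>\<real>\<close>.\<close>

lemma T_alpha_homogeneous: "T_alpha \<alpha> r (t * x) (t * y) = T_alpha \<alpha> r x y / t^(r + 2)"
proof (cases "even r")
  case True
  then obtain p where r: "r = 2 * p" by blast
  have scaled: "a * (4 * (Q_alpha \<alpha> (t * x) (t * y))^2)^k * (K_alpha \<alpha> (t * x) (t * y))^(p + k + 1)
      = a * (4 * (Q_alpha \<alpha> x y)^2)^k * (K_alpha \<alpha> x y)^(p + k + 1) / t^(r + 2)" for a k
  proof -
    have exponents: "p + k + 1 = p + 1 + k" "r + 2 = 2 * (p + 1)"
      by (simp_all add: r)
    have "(4 * (t * Q_alpha \<alpha> x y)^2)^k * (K_alpha \<alpha> x y / t^2)^(p + 1 + k)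
        = (4 * (Q_alpha \<alpha> x y)^2)^k * (K_alpha \<alpha> x y)^(p + 1 + k) / t^(2 * (p + 1))"
      by (rule homogeneous_term_scaling) simp
    then show ?thesis
      by (simp only: K_alpha_homogeneous Q_alpha_homogeneous exponents mult.assoc times_divide_eq_right)
  qed
  have "T_alpha \<alpha> r (t * x) (t * y) = fact (2 * p) * (\<Sum>k=0..p. (-1)^(p - k) * real ((p + k) choose (p - k))
      * (4 * (Q_alpha \<alpha> (t * x) (t * y))^2)^k * (K_alpha \<alpha> (t * x) (t * y))^(p + k + 1))"
    by (simp add: T_alpha_def r)
  also have "\<dots> = fact (2 * p) * (\<Sum>k=0..p. (-1)^(p - k) * real ((p + k) choose (p - k))
      * (4 * (Q_alpha \<alpha> x y)^2)^k * (K_alpha \<alpha> x y)^(p + k + 1) / t^(r + 2))"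
    by (simp only: scaled)
  also have "\<dots> = T_alpha \<alpha> r x y / t^(r + 2)"
    by (simp add: T_alpha_def r flip: sum_divide_distrib)
  finally show ?thesis .
next
  case False
  then obtain p where r: "r = 2 * p + 1" by (metis oddE)
  have scaled: "a * (4 * (Q_alpha \<alpha> (t * x) (t * y))^2)^k * (K_alpha \<alpha> (t * x) (t * y))^(p + 1 + k + 1)
      = a * (4 * (Q_alpha \<alpha> x y)^2)^k * (K_alpha \<alpha> x y)^(p + 1 + k + 1) / t^(2 * p + 4)" for a k
  proof -
    have exponents: "p + 1 + k + 1 = p + 2 + k" "2 * p + 4 = 2 * (p + 2)"
      by simp_all
    have "(4 * (t * Q_alpha \<alpha> x y)^2)^k * (K_alpha \<alpha> x y / t^2)^(p + 2 + k)
        = (4 * (Q_alpha \<alpha> x y)^2)^k * (K_alpha \<alpha> x y)^(p + 2 + k) / t^(2 * (p + 2))"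
      by (rule homogeneous_term_scaling) simp
    then show ?thesis
      by (simp only: K_alpha_homogeneous Q_alpha_homogeneous exponents mult.assoc times_divide_eq_right)
  qed
  have "T_alpha \<alpha> r (t * x) (t * y) = 2 * fact (2 * p + 1) * (t * Q_alpha \<alpha> x y)
      * (\<Sum>k=0..p. (-1)^(p + 1 - k) * real ((p + 1 + k) choose (p - k))
      * (4 * (Q_alpha \<alpha> (t * x) (t * y))^2)^k * (K_alpha \<alpha> (t * x) (t * y))^(p + 1 + k + 1))"
    by (simp add: T_alpha_def r Q_alpha_homogeneous add_ac)
  also have "\<dots> = 2 * fact (2 * p + 1) * (t * Q_alpha \<alpha> x y)
      * (\<Sum>k=0..p. (-1)^(p + 1 - k) * real ((p + 1 + k) choose (p - k))
      * (4 * (Q_alpha \<alpha> x y)^2)^k * (K_alpha \<alpha> x y)^(p + 1 + k + 1) / t^(2 * p + 4))"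
    by (simp only: scaled)
  also have "\<dots> = 2 * fact (2 * p + 1) * Q_alpha \<alpha> x y
      * (\<Sum>k=0..p. (-1)^(p + 1 - k) * real ((p + 1 + k) choose (p - k))
      * (4 * (Q_alpha \<alpha> x y)^2)^k * (K_alpha \<alpha> x y)^(p + 1 + k + 1)) * (t / t^(2 * p + 4))"
    by (simp add: mult_ac flip: sum_divide_distrib)
  also have "t / t^(2 * p + 4) = 1 / t^(r + 2)"
    by (cases "t = 0") (simp_all add: r eval_nat_numeral)
  finally show ?thesis
    by (simp add: T_alpha_def r add_ac)
qed

lemma T_alpha_quad_rational: "quad_rational (cos (pi * \<alpha>)) (T_alpha \<alpha> r)"
proof -
  have K: "quad_rational (cos (pi * \<alpha>)) (K_alpha \<alpha>)"
    using quad_rational.inverse_quad unfolding K_alpha_def quad_def .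
  have Q: "quad_rational (cos (pi * \<alpha>)) (Q_alpha \<alpha>)"
    unfolding Q_alpha_def by (intro quad_rational.intros)
  show ?thesis
    unfolding T_alpha_def Let_def
    by (cases "even r"; simp only: if_True if_False;
        intro quad_rational.mult quad_rational_sum quad_rational_power quad_rational.const K Q finite_atLeastAtMost)
qed

lemma fact_add_eq_fact_pochhammer: "fact (m + n) = fact m * pochhammer (real m + 1) n"
  using pochhammer_product'[of 1 m n] by (simp add: pochhammer_fact add.commute)

theorem lemma2:
  fixes \<alpha> :: real and j r :: nat
  assumes "0 \<le> \<alpha>" and "\<alpha> < 1" and "j \<ge> 1"
  shows "\<exists>L. ((\<lambda>y. T_alpha \<alpha> r 1 y) \<longlongrightarrow> L) (at_right 0) \<and>
             ((\<lambda>y. (deriv ^^ j) (\<lambda>x. T_alpha \<alpha> r x y) 1) \<longlongrightarrow>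
                (-1)^j * (fact (r+j+1) / fact (r+1)) * L) (at_right 0)"
proof -
  define c where "c = cos (pi * \<alpha>)"
  have "cos pi < c"
    unfolding c_def using assms by (intro cos_monotone_0_pi) auto
  then have quad_nonzero: "quad c 1 y \<noteq> 0" if "0 \<le> y" for y
    using quad_pos[OF _ that, of c] by simp
  obtain g where g: "quad_rational c g"
    and deriv_T: "\<And>x y. quad c x y \<noteq> 0 \<Longrightarrow> (deriv ^^ j) (\<lambda>x. T_alpha \<alpha> r x y) x = g x y"
    using quad_rational_higher_deriv[OF T_alpha_quad_rational[of \<alpha> r]] unfolding c_def by blast
  define L where "L = T_alpha \<alpha> r 1 0"
  have "T_alpha \<alpha> r x 0 = L / x^(r + 2)" for x
    using T_alpha_homogeneous[of \<alpha> r x 1 0] by (simp add: L_def)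
  then have "(\<lambda>x. T_alpha \<alpha> r x 0) = (\<lambda>x. L / x^(r + 2))" ..
  then have g_at_0: "g 1 0 = (-1)^j * (fact (r+j+1) / fact (r+1)) * L"
    using deriv_T[of 1 0] higher_deriv_inverse_power[of 1 j L "r + 2"]
      fact_add_eq_fact_pochhammer[of "r + 1" j]
    by (simp add: quad_def add_ac)
  have "(g 1 \<longlongrightarrow> g 1 0) (at_right 0)"
    using quad_rational_isCont[OF g quad_nonzero[OF order_refl]]
    by (simp add: isCont_def filterlim_at_split)
  moreover have "\<forall>\<^sub>F y in at_right 0. g 1 y = (deriv ^^ j) (\<lambda>x. T_alpha \<alpha> r x y) 1"
    using deriv_T quad_nonzero by (intro eventually_at_rightI[of 0 1]) auto
  ultimately have "((\<lambda>y. (deriv ^^ j) (\<lambda>x. T_alpha \<alpha> r x y) 1) \<longlongrightarrow> g 1 0) (at_right 0)"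
    by (rule tendsto_cong[THEN iffD1, rotated])
  moreover have "(T_alpha \<alpha> r 1 \<longlongrightarrow> L) (at_right 0)"
    using quad_rational_isCont[OF T_alpha_quad_rational[of \<alpha> r, folded c_def] quad_nonzero[OF order_refl]]
    by (simp add: L_def isCont_def filterlim_at_split)
  ultimately show ?thesis
    unfolding g_at_0 by blast
qed

end
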